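(* Let $A=(a_{ij})_{i,j\in\{1,\dots,\theta\}}$ be an indecomposable generalized Cartan matrix of indefinite type, $Q=\bigoplus_i\mathbb Z\alpha_i$ its root lattice, $Q_+=\sum_i\mathbb N_0\alpha_i$, and $W$ its Weyl group. Then for every $\gamma\in Q_+\setminus\{0\}$ the set $W\gamma\cap Q_+$ is infinite.
   Context: $W$ is the subgroup of $\mathrm{GL}(Q)$ generated by the simple reflections $s_i(\alpha_j)=\alpha_j-a_{ij}\alpha_i$. Types (finite, affine, indefinite) of indecomposable generalized Cartan matrices are in the sense of Kac. *)

theory Defs
  imports Complex_Main
begin

text \<open>A theta x theta matrix is a function nat => nat => int, indices 0..theta-1.
  Elements of the root lattice Q = (+)_i Z alpha_i are coefficient functions
  nat => int vanishing outside {0..<theta}.\<close>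

definition gcm :: "nat \<Rightarrow> (nat \<Rightarrow> nat \<Rightarrow> int) \<Rightarrow> bool" where
  "gcm n A \<longleftrightarrow> (\<forall>i<n. A i i = 2) \<and>
     (\<forall>i<n. \<forall>j<n. i \<noteq> j \<longrightarrow> A i j \<le> 0) \<and>
     (\<forall>i<n. \<forall>j<n. A i j = 0 \<longleftrightarrow> A j i = 0)"

definition indecomposable :: "nat \<Rightarrow> (nat \<Rightarrow> nat \<Rightarrow> int) \<Rightarrow> bool" where
  "indecomposable n A \<longleftrightarrow> n \<ge> 1 \<and>
     \<not> (\<exists>I J. I \<noteq> {} \<and> J \<noteq> {} \<and> I \<inter> J = {} \<and> I \<union> J = {0..<n} \<and>
             (\<forall>i\<in>I. \<forall>j\<in>J. A i j = 0))"

text \<open>Kac, Infinite dimensional Lie algebras, Thm 4.3, case (Ind): there is u > 0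
  with Au < 0, and Av >= 0, v >= 0 imply v = 0 (real vectors).\<close>
definition indefinite_type :: "nat \<Rightarrow> (nat \<Rightarrow> nat \<Rightarrow> int) \<Rightarrow> bool" where
  "indefinite_type n A \<longleftrightarrow>
     (\<exists>u :: nat \<Rightarrow> real. (\<forall>i<n. u i > 0) \<and> (\<forall>i<n. (\<Sum>j<n. of_int (A i j) * u j) < 0)) \<and>
     (\<forall>v :: nat \<Rightarrow> real. (\<forall>i<n. (\<Sum>j<n. of_int (A i j) * v j) \<ge> 0) \<and> (\<forall>i<n. v i \<ge> 0)
        \<longrightarrow> (\<forall>i<n. v i = 0))"

definition root_lattice :: "nat \<Rightarrow> (nat \<Rightarrow> int) set" where
  "root_lattice n = {\<beta>. \<forall>i\<ge>n. \<beta> i = 0}"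

definition pos_root_lattice :: "nat \<Rightarrow> (nat \<Rightarrow> int) set" where
  "pos_root_lattice n = {\<beta> \<in> root_lattice n. \<forall>i. \<beta> i \<ge> 0}"

text \<open>Simple reflection: s_i(alpha_j) = alpha_j - a_ij alpha_i, extended linearly.\<close>
definition simple_refl :: "nat \<Rightarrow> (nat \<Rightarrow> nat \<Rightarrow> int) \<Rightarrow> nat \<Rightarrow> (nat \<Rightarrow> int) \<Rightarrow> (nat \<Rightarrow> int)" where
  "simple_refl n A i \<beta> = (\<lambda>k. if k = i then \<beta> k - (\<Sum>j<n. A i j * \<beta> j) else \<beta> k)"

text \<open>Weyl group: the group generated by the simple reflections (as maps on Q).
  Since a_ii = 2, each s_i is an involution, so the monoid generated is the group.\<close>
inductive_set weyl_group :: "nat \<Rightarrow> (nat \<Rightarrow> nat \<Rightarrow> int) \<Rightarrow> ((nat \<Rightarrow> int) \<Rightarrow> (nat \<Rightarrow> int)) set"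
  for n A where
  id: "id \<in> weyl_group n A"
| refl: "w \<in> weyl_group n A \<Longrightarrow> i < n \<Longrightarrow> simple_refl n A i \<circ> w \<in> weyl_group n A"

end

theory Submission
  imports Defs
begin

text \<open>Suppose \<open>W\<gamma> \<inter> Q\<^sub>+\<close> were finite and pick \<open>\<beta> = w\<gamma>\<close> in it of maximal height. If
  \<open>(A\<beta>)\<^sub>i < 0\<close> for some \<open>i\<close>, then \<open>s\<^sub>i\<beta> = \<beta> - (A\<beta>)\<^sub>i \<alpha>\<^sub>i\<close> is again in \<open>W\<gamma> \<inter> Q\<^sub>+\<close> and
  strictly higher. Hence \<open>A\<beta> \<ge> 0\<close> and \<open>\<beta> \<ge> 0\<close>, which for indefinite type forces
  \<open>\<beta> = 0\<close>; but \<open>W\<close> acts by invertible maps, so \<open>\<beta> \<noteq> 0\<close>.\<close>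

definition height :: "nat \<Rightarrow> (nat \<Rightarrow> int) \<Rightarrow> int" where
  "height n \<beta> = (\<Sum>k<n. \<beta> k)"

lemma simple_refl_nonzero:
  assumes "A i i = 2" and "i < n" and "\<beta> \<noteq> (\<lambda>_. 0)"
  shows "simple_refl n A i \<beta> \<noteq> (\<lambda>_. 0)"
proof
  assume zero: "simple_refl n A i \<beta> = (\<lambda>_. 0)"
  have off_i: "\<beta> k = 0" if "k \<noteq> i" for k
    using fun_cong[OF zero, of k] that by (simp add: simple_refl_def)
  have "(\<Sum>j<n. A i j * \<beta> j) = (\<Sum>j<n. if j = i then 2 * \<beta> i else 0)"
    using assms(1) by (intro sum.cong) (auto simp: off_i)
  also have "\<dots> = 2 * \<beta> i"
    using assms(2) by simp
  finally have "\<beta> i = 0"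
    using fun_cong[OF zero, of i] by (simp add: simple_refl_def)
  with off_i have "\<beta> = (\<lambda>_. 0)"
    by (metis ext)
  with assms(3) show False by simp
qed

lemma weyl_group_nonzero:
  assumes "w \<in> weyl_group n A" and "gcm n A" and "\<beta> \<noteq> (\<lambda>_. 0)"
  shows "w \<beta> \<noteq> (\<lambda>_. 0)"
  using assms(1)
proof induction
  case id
  then show ?case using assms(3) by simp
next
  case (refl w i)
  then have "A i i = 2" using assms(2) by (simp add: gcm_def)
  with refl show ?case by (simp add: simple_refl_nonzero)
qed

lemma height_simple_refl:
  assumes "i < n"
  shows "height n (simple_refl n A i \<beta>) = height n \<beta> - (\<Sum>j<n. A i j * \<beta> j)"
proof -
  let ?c = "\<Sum>j<n. A i j * \<beta> j"
  have "height n (simple_refl n A i \<beta>) = (\<Sum>k<n. \<beta> k - (if k = i then ?c else 0))"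
    unfolding height_def by (intro sum.cong) (auto simp: simple_refl_def)
  also have "\<dots> = height n \<beta> - ?c"
    using assms by (simp add: sum_subtractf height_def)
  finally show ?thesis .
qed

lemma simple_refl_pos_root_lattice:
  assumes "\<beta> \<in> pos_root_lattice n" and "i < n" and "(\<Sum>j<n. A i j * \<beta> j) \<le> 0"
  shows "simple_refl n A i \<beta> \<in> pos_root_lattice n"
proof -
  have "0 \<le> \<beta> i"
    using assms(1) by (simp add: pos_root_lattice_def)
  with assms(3) have "0 \<le> \<beta> i - (\<Sum>j<n. A i j * \<beta> j)"
    by linarith
  with assms(1,2) show ?thesis
    by (auto simp: pos_root_lattice_def root_lattice_def simple_refl_def)
qed

lemma pos_root_lattice_dominant_eq_zero:
  assumes "indefinite_type n A" and "\<beta> \<in> pos_root_lattice n"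
    and dominant: "\<And>i. i < n \<Longrightarrow> 0 \<le> (\<Sum>j<n. A i j * \<beta> j)"
  shows "\<beta> = (\<lambda>_. 0)"
proof
  fix k
  let ?v = "\<lambda>j. real_of_int (\<beta> j)"
  have "\<forall>i<n. 0 \<le> (\<Sum>j<n. of_int (A i j) * ?v j)"
  proof (intro allI impI)
    fix i assume "i < n"
    have "(\<Sum>j<n. of_int (A i j) * ?v j) = real_of_int (\<Sum>j<n. A i j * \<beta> j)"
      by simp
    then show "0 \<le> (\<Sum>j<n. of_int (A i j) * ?v j)"
      using dominant[OF \<open>i < n\<close>] by linarith
  qed
  moreover have "\<forall>i<n. 0 \<le> ?v i"
    using assms(2) by (simp add: pos_root_lattice_def)
  ultimately have "\<forall>i<n. ?v i = 0"
    using assms(1) unfolding indefinite_type_def by (blast dest: spec[of _ ?v])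
  then show "\<beta> k = 0"
    using assms(2) by (cases "k < n") (auto simp: pos_root_lattice_def root_lattice_def)
qed

lemma max_height_in_orbit_dominant:
  assumes "w \<in> weyl_group n A" and "w \<gamma> \<in> pos_root_lattice n" and "i < n"
    and highest: "\<And>w'. w' \<in> weyl_group n A \<Longrightarrow> w' \<gamma> \<in> pos_root_lattice n \<Longrightarrow>
                    height n (w' \<gamma>) \<le> height n (w \<gamma>)"
  shows "0 \<le> (\<Sum>j<n. A i j * w \<gamma> j)"
proof (rule ccontr)
  assume neg: "\<not> 0 \<le> (\<Sum>j<n. A i j * w \<gamma> j)"
  have "simple_refl n A i \<circ> w \<in> weyl_group n A"
    using assms(1,3) by (rule weyl_group.refl)
  moreover have "simple_refl n A i (w \<gamma>) \<in> pos_root_lattice n"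
    using assms(2,3) neg by (intro simple_refl_pos_root_lattice) auto
  ultimately have "height n (simple_refl n A i (w \<gamma>)) \<le> height n (w \<gamma>)"
    using highest by fastforce
  with neg show False
    using height_simple_refl[OF assms(3)] by simp
qed

theorem lemma3p5:
  fixes \<theta> :: nat and A :: "nat \<Rightarrow> nat \<Rightarrow> int" and \<gamma> :: "nat \<Rightarrow> int"
  assumes "gcm \<theta> A" and "indecomposable \<theta> A" and "indefinite_type \<theta> A"
    and "\<gamma> \<in> pos_root_lattice \<theta>" and "\<gamma> \<noteq> (\<lambda>_. 0)"
  shows "infinite ((\<lambda>w. w \<gamma>) ` weyl_group \<theta> A \<inter> pos_root_lattice \<theta>)"
proof
  let ?S = "(\<lambda>w. w \<gamma>) ` weyl_group \<theta> A \<inter> pos_root_lattice \<theta>"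
  assume "finite ?S"
  moreover have "\<gamma> \<in> ?S"
    using assms(4) weyl_group.id[of \<theta> A] by (metis IntI id_apply image_eqI)
  ultimately have "Max (height \<theta> ` ?S) \<in> height \<theta> ` ?S"
    by (intro Max_in) auto
  then obtain w where w: "w \<in> weyl_group \<theta> A" "w \<gamma> \<in> pos_root_lattice \<theta>"
    and max: "height \<theta> (w \<gamma>) = Max (height \<theta> ` ?S)"
    by auto
  have highest: "height \<theta> (w' \<gamma>) \<le> height \<theta> (w \<gamma>)"
    if "w' \<in> weyl_group \<theta> A" "w' \<gamma> \<in> pos_root_lattice \<theta>" for w'
    unfolding max using \<open>finite ?S\<close> that by (intro Max_ge) auto
  have "0 \<le> (\<Sum>j<\<theta>. A i j * w \<gamma> j)" if "i < \<theta>" for i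
    using w that highest by (rule max_height_in_orbit_dominant)
  then have "w \<gamma> = (\<lambda>_. 0)"
    by (rule pos_root_lattice_dominant_eq_zero[OF assms(3) w(2)])
  with weyl_group_nonzero[OF w(1) assms(1,5)] show False ..
qed

end
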